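(* For every $p\in[1,+\infty)$ and every $z\in X$, the operator $C^1_b(X)\to L^p(X,\nu)$, $\varphi\mapsto\langle R\nabla\varphi,z\rangle$, is closable in $L^p(X,\nu)$. Consequently the operator $R\nabla$ with domain $C^1_b(X)$, from $L^p(X,\nu)$ to $L^p(X,\nu;X)$, is closable in $L^p(X,\nu)$.
   Context: $X$ is a separable real Hilbert space with inner product $\langle\cdot,\cdot\rangle$, $\nu$ a Borel probability measure on $X$, $R\in\mathcal L(X)$. $C^1_b(X)$ is the space of bounded, continuously Fréchet differentiable $\varphi:X\to\mathbb R$ with bounded gradient $\nabla\varphi$. Standing assumption: for every $z\in X$ there exists $v_z\in\bigcap_{p>1}L^p(X,\nu)$ with $\int_X\langle R\nabla\varphi,z\rangle\,d\nu=\int_Xv_z\varphi\,d\nu$ for all $\varphi\in C^1_b(X)$. *)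

theory Defs
  imports "HOL-Probability.Probability"
begin

definition grad :: "('a::real_inner \<Rightarrow> real) \<Rightarrow> 'a \<Rightarrow> 'a" where
  "grad f x = (SOME v. (f has_derivative (\<lambda>h. v \<bullet> h)) (at x))"

definition C1b :: "('a::real_inner \<Rightarrow> real) set" where
  "C1b = {f. bounded (range f)
             \<and> (\<forall>x. (f has_derivative (\<lambda>h. grad f x \<bullet> h)) (at x))
             \<and> continuous_on UNIV (grad f)
             \<and> bounded (range (grad f))}"

definition Lp_closable ::
  "'a measure \<Rightarrow> real \<Rightarrow> ('a \<Rightarrow> real) set \<Rightarrow> (('a \<Rightarrow> real) \<Rightarrow> 'a \<Rightarrow> 'b::{banach, second_countable_topology}) \<Rightarrow> bool" where
  "Lp_closable M p D T \<longleftrightarrow>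
     (\<forall>(\<phi>::nat \<Rightarrow> 'a \<Rightarrow> real) (g::'a \<Rightarrow> 'b).
        (\<forall>n. \<phi> n \<in> D)
        \<and> (\<lambda>n. \<integral>x. \<bar>\<phi> n x\<bar> powr p \<partial>M) \<longlonglongrightarrow> 0
        \<and> g \<in> borel_measurable M
        \<and> integrable M (\<lambda>x. norm (g x) powr p)
        \<and> (\<lambda>n. \<integral>x. norm (T (\<phi> n) x - g x) powr p \<partial>M) \<longlonglongrightarrow> 0
        \<longrightarrow> (AE x in M. g x = 0))"

end

theory Submission
  imports Defs "HOL-Real_Asymp.Real_Asymp"
begin

text \<open>Let \<open>\<phi>\<^sub>n \<rightarrow> 0\<close> and \<open>\<langle>R \<nabla>\<phi>\<^sub>n, z\<rangle> \<rightarrow> g\<close> in \<open>L\<^sup>p\<close>. Testing the integration by parts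
  hypothesis against \<open>\<psi> arctan \<phi>\<^sub>n\<close> for \<open>\<psi> \<in> C\<^sup>1\<^sub>b\<close> gives
  \<open>\<integral> \<psi> (1 + \<phi>\<^sub>n\<^sup>2)\<^sup>-\<^sup>1 \<langle>R \<nabla>\<phi>\<^sub>n, z\<rangle> = \<integral> v \<psi> arctan \<phi>\<^sub>n - \<integral> arctan \<phi>\<^sub>n \<langle>R \<nabla>\<psi>, z\<rangle>\<close>,
  where all weights are bounded. Along a subsequence with \<open>\<phi>\<^sub>n \<rightarrow> 0\<close> a.e., dominated convergence
  sends the left side to \<open>\<integral> \<psi> g\<close> and the right side to \<open>0\<close>. So \<open>g\<close> is orthogonal to
  \<open>C\<^sup>1\<^sub>b\<close>; as indicators of finite intersections of balls are bounded pointwise limits of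
  \<open>C\<^sup>1\<^sub>b\<close> functions and generate the Borel sets, \<open>g = 0\<close> a.e. The vector-valued statement
  follows by testing against the directions of a countable dense set.\<close>

section \<open>Calculus of C1b functions\<close>

lemma borel_measurable_continuous_sets_borel:
  fixes f :: "'a::topological_space \<Rightarrow> 'b::topological_space"
  assumes "sets M = sets borel" "continuous_on UNIV f"
  shows "f \<in> borel_measurable M"
  using borel_measurable_continuous_onI[OF assms(2)] measurable_cong_sets[OF assms(1) refl] by blast

lemma grad_eqI:
  fixes f :: "'a::real_inner \<Rightarrow> real"
  assumes "(f has_derivative (\<lambda>h. v \<bullet> h)) (at x)"
  shows "grad f x = v"
proof -
  have "(f has_derivative (\<lambda>h. grad f x \<bullet> h)) (at x)"
    unfolding grad_def using someI[where P="\<lambda>w. (f has_derivative (\<lambda>h. w \<bullet> h)) (at x)"] assms .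
  then have "(\<lambda>h. grad f x \<bullet> h) = (\<lambda>h. v \<bullet> h)"
    using assms by (rule has_derivative_unique)
  then have "(grad f x - v) \<bullet> (grad f x - v) = 0"
    by (metis inner_diff_left right_minus_eq)
  then show ?thesis by simp
qed

lemma C1bI:
  fixes f :: "'a::real_inner \<Rightarrow> real"
  assumes "\<And>x. \<bar>f x\<bar> \<le> B" "\<And>x. (f has_derivative (\<lambda>h. G x \<bullet> h)) (at x)"
    "continuous_on UNIV G" "\<And>x. norm (G x) \<le> C"
  shows "f \<in> C1b" "grad f = G"
proof -
  show g: "grad f = G" using grad_eqI[OF assms(2)] by auto
  have "bounded (range f)" "bounded (range G)"
    unfolding bounded_iff using assms(1,4) by auto
  then show "f \<in> C1b" using assms g by (simp add: C1b_def)
qed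

lemma C1bD:
  fixes f :: "'a::real_inner \<Rightarrow> real"
  assumes "f \<in> C1b"
  shows "\<exists>B. \<forall>x. \<bar>f x\<bar> \<le> B" "\<And>x. (f has_derivative (\<lambda>h. grad f x \<bullet> h)) (at x)"
    "continuous_on UNIV (grad f)" "\<exists>C. \<forall>x. norm (grad f x) \<le> C" "continuous_on UNIV f"
proof -
  show "\<exists>B. \<forall>x. \<bar>f x\<bar> \<le> B" "\<And>x. (f has_derivative (\<lambda>h. grad f x \<bullet> h)) (at x)"
    "continuous_on UNIV (grad f)" "\<exists>C. \<forall>x. norm (grad f x) \<le> C"
    using assms by (auto simp: C1b_def bounded_iff)
  then show "continuous_on UNIV f"
    by (meson continuous_at_imp_continuous_on has_derivative_continuous)
qed

lemma C1b_borel_measurable: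
  "sets M = sets borel \<Longrightarrow> f \<in> C1b \<Longrightarrow> f \<in> borel_measurable M"
  by (rule borel_measurable_continuous_sets_borel) (auto dest: C1bD(5))

lemma C1b_const: "(\<lambda>x. c) \<in> C1b"
  by (rule C1bI[where B="\<bar>c\<bar>" and C=0 and G="\<lambda>x. 0"]) (auto intro!: derivative_eq_intros)

lemma C1b_affine:
  fixes f :: "'a::real_inner \<Rightarrow> real"
  assumes "f \<in> C1b"
  shows "(\<lambda>x. a * f x + b) \<in> C1b"
proof -
  obtain B C where B: "\<And>x. \<bar>f x\<bar> \<le> B" and C: "\<And>x. norm (grad f x) \<le> C"
    using C1bD(1,4)[OF assms] by metis
  have "((\<lambda>x. a * f x + b) has_derivative (\<lambda>h. (a *\<^sub>R grad f x) \<bullet> h)) (at x)" for x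
    using C1bD(2)[OF assms, of x] by (auto intro!: derivative_eq_intros)
  moreover have "\<bar>a * f x + b\<bar> \<le> \<bar>a\<bar> * B + \<bar>b\<bar>" for x
  proof -
    have "\<bar>a * f x + b\<bar> \<le> \<bar>a\<bar> * \<bar>f x\<bar> + \<bar>b\<bar>"
      using abs_triangle_ineq[of "a * f x" b] by (simp add: abs_mult)
    then show ?thesis using mult_left_mono[OF B[of x] abs_ge_zero[of a]] by linarith
  qed
  moreover have "norm (a *\<^sub>R grad f x) \<le> \<bar>a\<bar> * C" for x
    using mult_left_mono[OF C[of x] abs_ge_zero[of a]] by simp
  moreover have "continuous_on UNIV (\<lambda>x. a *\<^sub>R grad f x)"
    by (intro continuous_intros C1bD(3)[OF assms])
  ultimately show ?thesis by (intro C1bI(1))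
qed

lemma C1b_mult:
  fixes f g :: "'a::real_inner \<Rightarrow> real"
  assumes "f \<in> C1b" "g \<in> C1b"
  shows "(\<lambda>x. f x * g x) \<in> C1b"
    "grad (\<lambda>x. f x * g x) = (\<lambda>x. f x *\<^sub>R grad g x + g x *\<^sub>R grad f x)"
proof -
  obtain B1 B2 C1 C2 where B: "\<And>x. \<bar>f x\<bar> \<le> B1" "\<And>x. \<bar>g x\<bar> \<le> B2"
    and C: "\<And>x. norm (grad f x) \<le> C1" "\<And>x. norm (grad g x) \<le> C2"
    using C1bD(1,4)[OF assms(1)] C1bD(1,4)[OF assms(2)] by metis
  have d: "((\<lambda>x. f x * g x) has_derivative (\<lambda>h. (f x *\<^sub>R grad g x + g x *\<^sub>R grad f x) \<bullet> h)) (at x)" for x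
    using has_derivative_mult[OF C1bD(2)[OF assms(1)] C1bD(2)[OF assms(2)], of x]
    by (simp add: inner_add_left algebra_simps)
  have b: "\<bar>f x * g x\<bar> \<le> B1 * B2" for x
    unfolding abs_mult by (intro mult_mono B) (auto intro: order_trans[OF abs_ge_zero B(1)])
  have c: "norm (f x *\<^sub>R grad g x + g x *\<^sub>R grad f x) \<le> B1 * C2 + B2 * C1" for x
  proof -
    have "norm (f x *\<^sub>R grad g x + g x *\<^sub>R grad f x)
        \<le> \<bar>f x\<bar> * norm (grad g x) + \<bar>g x\<bar> * norm (grad f x)"
      by (metis norm_scaleR norm_triangle_ineq)
    also have "\<dots> \<le> B1 * C2 + B2 * C1"
      by (intro add_mono mult_mono B C)
        (auto intro: order_trans[OF abs_ge_zero B(1)] order_trans[OF abs_ge_zero B(2)])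
    finally show ?thesis .
  qed
  have "continuous_on UNIV (\<lambda>x. f x *\<^sub>R grad g x + g x *\<^sub>R grad f x)"
    by (intro continuous_intros C1bD[OF assms(1)] C1bD[OF assms(2)])
  from C1bI[OF b d this c] show "(\<lambda>x. f x * g x) \<in> C1b"
    "grad (\<lambda>x. f x * g x) = (\<lambda>x. f x *\<^sub>R grad g x + g x *\<^sub>R grad f x)"
    by auto
qed

lemma C1b_comp:
  fixes f :: "'a::real_inner \<Rightarrow> real"
  assumes "f \<in> C1b" "\<And>t. (\<theta> has_real_derivative \<theta>' t) (at t)" "continuous_on UNIV \<theta>'"
    "\<And>t. \<bar>\<theta> t\<bar> \<le> B" "\<And>t. \<bar>\<theta>' t\<bar> \<le> B'"
  shows "(\<lambda>x. \<theta> (f x)) \<in> C1b" "grad (\<lambda>x. \<theta> (f x)) = (\<lambda>x. \<theta>' (f x) *\<^sub>R grad f x)"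
proof -
  obtain C where C: "\<And>x. norm (grad f x) \<le> C" using C1bD(4)[OF assms(1)] by blast
  have d: "((\<lambda>x. \<theta> (f x)) has_derivative (\<lambda>h. (\<theta>' (f x) *\<^sub>R grad f x) \<bullet> h)) (at x)" for x
    using has_derivative_compose[OF C1bD(2)[OF assms(1)] assms(2)[unfolded has_field_derivative_def]]
    by (simp add: algebra_simps)
  have c: "norm (\<theta>' (f x) *\<^sub>R grad f x) \<le> B' * C" for x
    unfolding norm_scaleR by (intro mult_mono assms(5) C) (auto intro: order_trans[OF abs_ge_zero assms(5)])
  have "continuous_on UNIV (\<lambda>x. \<theta>' (f x) *\<^sub>R grad f x)"
    by (intro continuous_intros C1bD[OF assms(1)] continuous_on_compose2[OF assms(3)]) auto
  from C1bI[OF assms(4) d this c] show "(\<lambda>x. \<theta> (f x)) \<in> C1b" "grad (\<lambda>x. \<theta> (f x)) = (\<lambda>x. \<theta>' (f x) *\<^sub>R grad f x)"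
    by auto
qed

lemma abs_arctan_le_2: "\<bar>arctan t\<bar> \<le> 2"
  using arctan_bounded[of t] pi_less_4 by (auto simp: abs_le_iff)

lemma abs_inverse_1_plus_square_le_1: "\<bar>inverse (1 + t\<^sup>2)\<bar> \<le> (1::real)"
  by (simp add: add_pos_nonneg inverse_le_1_iff)

lemma C1b_arctan:
  assumes "f \<in> C1b"
  shows "(\<lambda>x. arctan (f x)) \<in> C1b"
    "grad (\<lambda>x. arctan (f x)) = (\<lambda>x. inverse (1 + (f x)\<^sup>2) *\<^sub>R grad f x)"
proof -
  have "continuous_on UNIV (\<lambda>t::real. inverse (1 + t\<^sup>2))"
    by (intro continuous_intros) (metis add_pos_nonneg zero_le_power2 zero_less_one less_irrefl)
  then show "(\<lambda>x. arctan (f x)) \<in> C1b"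
    "grad (\<lambda>x. arctan (f x)) = (\<lambda>x. inverse (1 + (f x)\<^sup>2) *\<^sub>R grad f x)"
    using C1b_comp[OF assms DERIV_arctan _ abs_arctan_le_2 abs_inverse_1_plus_square_le_1] by auto
qed

lemma C1b_inverse_1_plus_dist_square: "(\<lambda>x::'a::real_inner. 1 / (1 + (dist x a)\<^sup>2)) \<in> C1b"
proof -
  let ?G = "\<lambda>x. (- 2 / (1 + (dist x a)\<^sup>2)\<^sup>2) *\<^sub>R (x - a)"
  have pos: "1 + (dist x a)\<^sup>2 > 0" for x :: 'a
    by (simp add: add_pos_nonneg)
  have sq: "(dist x a)\<^sup>2 = (x - a) \<bullet> (x - a)" for x :: 'a
    by (simp add: dist_norm power2_norm_eq_inner)
  have d: "((\<lambda>x. 1 / (1 + (dist x a)\<^sup>2)) has_derivative (\<lambda>h. ?G x \<bullet> h)) (at x)" for x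
  proof -
    have "((\<lambda>x. 1 / (1 + (x - a) \<bullet> (x - a))) has_derivative
      (\<lambda>h. (- ((x - a) \<bullet> h) - h \<bullet> (x - a)) / ((1 + (dist x a)\<^sup>2) * (1 + (dist x a)\<^sup>2)))) (at x)"
      using pos[of x] unfolding sq by (auto intro!: derivative_eq_intros)
    then show ?thesis
      unfolding sq by (simp add: inner_commute power2_eq_square)
  qed
  have b: "\<bar>1 / (1 + (dist x a)\<^sup>2)\<bar> \<le> 1" for x
    using pos[of x] by simp
  have c: "norm (?G x) \<le> 2" for x
  proof -
    define s where "s = dist x a"
    have "0 \<le> (s - 1)\<^sup>2" by simp
    then have "2 * s \<le> 1 + s\<^sup>2" by (simp add: power2_diff)
    then have "s \<le> 1 + s\<^sup>2" using zero_le_dist[of x a] unfolding s_def by linarith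
    moreover have "1 * (1 + s\<^sup>2) \<le> (1 + s\<^sup>2) * (1 + s\<^sup>2)"
      by (intro mult_right_mono) auto
    ultimately have "s \<le> (1 + s\<^sup>2)\<^sup>2" by (simp add: power2_eq_square)
    then have "2 * s / (1 + s\<^sup>2)\<^sup>2 \<le> 2"
      by (simp add: divide_le_eq add_pos_nonneg)
    moreover have "norm (?G x) = 2 * s / (1 + s\<^sup>2)\<^sup>2"
      by (simp add: s_def dist_norm add_pos_nonneg)
    ultimately show ?thesis by simp
  qed
  have "continuous_on UNIV ?G"
    by (intro continuous_intros) (metis pos less_irrefl power_not_zero)
  from C1bI(1)[OF b d this c] show ?thesis .
qed

section \<open>Density of C1b\<close>

definition arctan_step :: "real \<Rightarrow> nat \<Rightarrow> real \<Rightarrow> real" where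
  "arctan_step c k s = 1/2 + arctan (real k ^ 2 * (s - c) - real k) / pi"

lemma abs_arctan_step_le_1: "\<bar>arctan_step c k s\<bar> \<le> 1"
proof -
  define t where "t = arctan (real k ^ 2 * (s - c) - real k)"
  have "- (pi / 2) < t" "t < pi / 2"
    using arctan_bounded unfolding t_def by auto
  then have "- 1/2 < t / pi" "t / pi < 1/2"
    by (simp_all add: less_divide_eq divide_less_eq)
  then show ?thesis unfolding arctan_step_def t_def[symmetric] by linarith
qed

lemma C1b_arctan_step:
  assumes "f \<in> C1b"
  shows "(\<lambda>x. arctan_step c k (f x)) \<in> C1b"
proof -
  have "(\<lambda>x. arctan_step c k (f x))
      = (\<lambda>x. (1 / pi) * arctan (real k ^ 2 * f x + (- (real k ^ 2 * c) - real k)) + 1 / 2)"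
    by (simp add: arctan_step_def algebra_simps)
  then show ?thesis
    by (metis C1b_affine C1b_arctan(1) assms)
qed

text \<open>The shift by \<open>- k\<close> makes the limit vanish at the jump \<open>s = c\<close>, so the limit is the
  indicator of the strict inequality.\<close>
lemma arctan_step_tendsto: "(\<lambda>k. arctan_step c k s) \<longlonglongrightarrow> (if c < s then 1 else 0)"
proof (cases "c < s")
  case True
  then have "filterlim (\<lambda>k. real k ^ 2 * (s - c) - real k) at_top sequentially"
    by real_asymp
  then have "(\<lambda>k. arctan (real k ^ 2 * (s - c) - real k)) \<longlonglongrightarrow> pi / 2"
    by (rule filterlim_compose[OF tendsto_arctan_at_top])
  then have "(\<lambda>k. arctan_step c k s) \<longlonglongrightarrow> 1/2 + (pi / 2) / pi"
    unfolding arctan_step_def by (intro tendsto_intros) auto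
  then show ?thesis using True by simp
next
  case False
  then have "filterlim (\<lambda>k. real k ^ 2 * (s - c) - real k) at_bot sequentially"
    by (cases "s = c") (simp, real_asymp, real_asymp)
  then have "(\<lambda>k. arctan (real k ^ 2 * (s - c) - real k)) \<longlonglongrightarrow> - (pi / 2)"
    by (rule filterlim_compose[OF tendsto_arctan_at_bot])
  then have "(\<lambda>k. arctan_step c k s) \<longlonglongrightarrow> 1/2 + (- (pi / 2)) / pi"
    unfolding arctan_step_def by (intro tendsto_intros) auto
  then show ?thesis using False by simp
qed

definition C1b_approximable :: "('a::real_inner \<Rightarrow> real) \<Rightarrow> bool" where
  "C1b_approximable f \<longleftrightarrow>
     (\<exists>u. (\<forall>k. u k \<in> C1b) \<and> (\<forall>k x. \<bar>u k x\<bar> \<le> 1) \<and> (\<forall>x. (\<lambda>k. u k x) \<longlonglongrightarrow> f x))"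

lemma C1b_approximable_mult:
  assumes "C1b_approximable f" "C1b_approximable g"
  shows "C1b_approximable (\<lambda>x. f x * g x)"
proof -
  obtain u v where u: "\<And>k. u k \<in> C1b" "\<And>k x. \<bar>u k x\<bar> \<le> 1" "\<And>x. (\<lambda>k. u k x) \<longlonglongrightarrow> f x"
    and v: "\<And>k. v k \<in> C1b" "\<And>k x. \<bar>v k x\<bar> \<le> 1" "\<And>x. (\<lambda>k. v k x) \<longlonglongrightarrow> g x"
    using assms unfolding C1b_approximable_def by metis
  have "\<bar>u k x * v k x\<bar> \<le> 1" for k x
    unfolding abs_mult by (intro mult_le_one u v) auto
  then show ?thesis
    unfolding C1b_approximable_def using u v
    by (intro exI[of _ "\<lambda>k x. u k x * v k x"]) (auto intro!: C1b_mult tendsto_mult)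
qed

lemma C1b_approximable_indicator_ball:
  fixes a :: "'a::real_inner"
  assumes "0 \<le> r"
  shows "C1b_approximable (indicator (ball a r))"
proof -
  define c where "c = 1 / (1 + r\<^sup>2)"
  have "c < 1 / (1 + (dist x a)\<^sup>2) \<longleftrightarrow> x \<in> ball a r" for x
  proof -
    have "c < 1 / (1 + (dist x a)\<^sup>2) \<longleftrightarrow> (dist x a)\<^sup>2 < r\<^sup>2"
      using inverse_less_iff_less[of "1 + r\<^sup>2" "1 + (dist x a)\<^sup>2"]
      unfolding c_def by (simp add: inverse_eq_divide add_pos_nonneg)
    also have "\<dots> \<longleftrightarrow> x \<in> ball a r"
      using assms by (auto simp: dist_commute intro: power_less_imp_less_base power_strict_mono)
    finally show ?thesis .
  qed
  then have "(\<lambda>k. arctan_step c k (1 / (1 + (dist x a)\<^sup>2))) \<longlonglongrightarrow> indicator (ball a r) x" for x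
    using arctan_step_tendsto[of c "1 / (1 + (dist x a)\<^sup>2)"] by (auto simp: indicator_def)
  then show ?thesis
    unfolding C1b_approximable_def
    by (intro exI[of _ "\<lambda>k x. arctan_step c k (1 / (1 + (dist x a)\<^sup>2))"])
      (auto simp: abs_arctan_step_le_1 intro!: C1b_arctan_step C1b_inverse_1_plus_dist_square)
qed

definition ball_Inters :: "'a::metric_space set set" where
  "ball_Inters = {\<Inter>F | F. finite F \<and> F \<subseteq> {ball a r | a r. 0 < r}}"

lemma Int_stable_ball_Inters: "Int_stable ball_Inters"
  unfolding Int_stable_def ball_Inters_def
  by safe (metis (no_types, lifting) Inf_union_distrib finite_UnI le_sup_iff)

lemma UNIV_in_ball_Inters: "UNIV \<in> ball_Inters"
  unfolding ball_Inters_def by (auto intro!: exI[of _ "{}"])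

lemma sigma_sets_ball_Inters:
  "sigma_sets UNIV ball_Inters = sets (borel :: 'a::{metric_space, second_countable_topology} measure)"
proof -
  obtain D :: "'a set" where basis: "topological_basis (case_prod ball ` (D \<times> (\<rat> \<inter> {0<..})))"
    and "countable D"
    using balls_countable_basis by blast
  let ?B = "case_prod ball ` (D \<times> (\<rat> \<inter> {0<..}))"
  have "countable ?B"
    using \<open>countable D\<close> countable_rat by blast
  then have "sets borel = sigma_sets UNIV ?B"
    by (subst borel_eq_countable_basis[OF _ basis]) simp_all
  moreover have "\<dots> \<subseteq> sigma_sets UNIV ball_Inters"
    unfolding ball_Inters_def by (rule sigma_sets_mono') (force intro!: exI[of _ "{ball _ _}"])
  moreover have "ball_Inters \<subseteq> sets borel"
    unfolding ball_Inters_def by (auto intro!: borel_open open_Inter)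
  ultimately show ?thesis
    using borel_sigma_sets_subset[of ball_Inters] by auto
qed

lemma C1b_approximable_indicator_ball_Inters:
  assumes "A \<in> (ball_Inters :: 'a::real_inner set set)"
  shows "C1b_approximable (indicator A :: 'a \<Rightarrow> real)"
proof -
  have "C1b_approximable (indicator (\<Inter>F) :: 'a \<Rightarrow> real)"
    if "finite F" "F \<subseteq> {ball a r | a r. 0 < r}" for F
    using that
  proof (induction F rule: finite_induct)
    case empty
    then show ?case
      unfolding C1b_approximable_def by (intro exI[of _ "\<lambda>k x. 1"]) (auto intro: C1b_const)
  next
    case (insert B F)
    then have "C1b_approximable (\<lambda>x. indicator B x * indicator (\<Inter>F) x :: real)"
      by (auto intro!: C1b_approximable_mult C1b_approximable_indicator_ball)
    then show ?case by (simp add: indicator_inter_arith[symmetric])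
  qed
  then show ?thesis
    using assms unfolding ball_Inters_def by blast
qed

lemma AE_eq_0_if_set_integrals_generator_eq_0:
  fixes g :: "'a \<Rightarrow> real"
  assumes M: "sigma_finite_measure M" and g: "integrable M g"
    and G: "Int_stable G" "G \<subseteq> Pow (space M)" "space M \<in> G" "sets M = sigma_sets (space M) G"
    and zero: "\<And>A. A \<in> G \<Longrightarrow> (LINT x:A|M. g x) = 0"
  shows "AE x in M. g x = 0"
proof (rule sigma_finite_measure.density_zero[OF M g])
  have indicator_g: "integrable M (\<lambda>x. indicator B x * g x)" if "B \<in> sets M" for B
    using integrable_mult_indicator[OF that g] by simp
  fix A assume "A \<in> sets M"
  with G(1,2) show "(LINT x:A|M. g x) = 0"
    unfolding G(4)
  proof (induction A rule: sigma_sets_induct_disjoint)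
    case (basic A)
    then show ?case by (rule zero)
  next
    case empty
    then show ?case by (simp add: set_lebesgue_integral_def)
  next
    case (compl A)
    then have "A \<in> sets M" by (simp add: G(4))
    then have "(LINT x:space M|M. g x) = (LINT x:space M - A|M. g x) + (LINT x:A|M. g x)"
      using set_integral_Un[of "space M - A" A M g] g \<open>A \<in> sets M\<close> sets.sets_into_space[OF \<open>A \<in> sets M\<close>]
      by (auto simp: set_integrable_def indicator_g Un_absorb2)
    then show ?case using compl.IH zero[OF G(3)] by simp
  next
    case (union A)
    then have "\<And>i. A i \<in> sets M" by (auto simp: G(4))
    then have "(LINT x:(\<Union>i. A i)|M. g x) = (\<Sum>i. LINT x:A i|M. g x)"
      using union.hyps(1) g
      by (intro lebesgue_integral_countable_add)
        (auto simp: disjoint_family_on_def set_integrable_def intro!: indicator_g)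
    then show ?case using union.IH by simp
  qed
qed

lemma AE_eq_0_if_orthogonal_C1b:
  fixes g :: "'a::{real_inner, second_countable_topology} \<Rightarrow> real"
  assumes M: "sets M = sets borel" "sigma_finite_measure M" and g: "integrable M g"
    and orth: "\<And>\<psi>. \<psi> \<in> C1b \<Longrightarrow> (\<integral>x. \<psi> x * g x \<partial>M) = 0"
  shows "AE x in M. g x = 0"
proof (rule AE_eq_0_if_set_integrals_generator_eq_0[OF M(2) g Int_stable_ball_Inters])
  have "space M = UNIV" using sets_eq_imp_space_eq[OF M(1)] by simp
  then show "ball_Inters \<subseteq> Pow (space M)" "space M \<in> ball_Inters"
    "sets M = sigma_sets (space M) ball_Inters"
    using M UNIV_in_ball_Inters sigma_sets_ball_Inters by auto
  fix A :: "'a set" assume "A \<in> ball_Inters"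
  then obtain u where u: "\<And>k. u k \<in> C1b" "\<And>k x. \<bar>u k x\<bar> \<le> 1"
    "\<And>x. (\<lambda>k. u k x) \<longlonglongrightarrow> indicator A x"
    using C1b_approximable_indicator_ball_Inters unfolding C1b_approximable_def by metis
  have "A \<in> sets M"
    using \<open>A \<in> ball_Inters\<close> M sigma_sets_ball_Inters[where 'a='a] by (auto intro: sigma_sets.Basic)
  have "(\<lambda>k. \<integral>x. u k x * g x \<partial>M) \<longlonglongrightarrow> (\<integral>x. indicator A x * g x \<partial>M)"
  proof (rule integral_dominated_convergence[where w="\<lambda>x. norm (g x)"])
    show "(\<lambda>x. u k x * g x) \<in> borel_measurable M" for k
      using C1b_borel_measurable[OF M(1) u(1)] g by simp
    show "AE x in M. norm (u k x * g x) \<le> norm (g x)" for k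
      using u(2) by (simp add: abs_mult mult_left_le_one_le)
  qed (use g \<open>A \<in> sets M\<close> u(3) in \<open>auto intro!: AE_I2 tendsto_mult\<close>)
  then show "(LINT x:A|M. g x) = 0"
    using orth[OF u(1)] by (simp add: set_lebesgue_integral_def LIMSEQ_const_iff)
qed

section \<open>From Lp to L1 convergence\<close>

lemma le_eps_plus_powr:
  fixes t e p :: real
  assumes "0 < e" "0 \<le> t" "1 \<le> p"
  shows "t \<le> e + e powr (1 - p) * t powr p"
proof (cases "t \<le> e")
  case True
  then show ?thesis by (smt (verit) mult_nonneg_nonneg powr_ge_zero)
next
  case False
  then have te: "t > e" by simp
  have tp: "t powr p = t * t powr (p - 1)"
    using powr_add[of t 1 "p - 1"] te assms by simp
  have "e powr (p - 1) \<le> t powr (p - 1)" using te assms by (intro powr_mono2) auto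
  then have "t * e powr (p - 1) \<le> t powr p" unfolding tp using assms by (intro mult_left_mono) auto
  then have "e powr (1 - p) * (t * e powr (p - 1)) \<le> e powr (1 - p) * t powr p"
    by (intro mult_left_mono) auto
  moreover have "e powr (1 - p) * (t * e powr (p - 1)) = t"
  proof -
    have "e powr (1 - p) * e powr (p - 1) = 1"
      using powr_add[of e "1 - p" "p - 1", symmetric] assms by simp
    then show ?thesis by (simp add: ac_simps)
  qed
  ultimately show ?thesis using assms by linarith
qed

lemma powr_add_le:
  fixes a b p :: real
  assumes "0 \<le> a" "0 \<le> b" "0 \<le> p"
  shows "(a + b) powr p \<le> 2 powr p * (a powr p + b powr p)"
proof -
  have "(a + b) powr p \<le> (2 * max a b) powr p" using assms by (intro powr_mono2) auto
  also have "\<dots> = 2 powr p * max a b powr p" by (simp add: powr_mult)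
  also have "max a b powr p \<le> a powr p + b powr p"
    by (cases "a \<le> b") (auto simp: max_def)
  then have "2 powr p * max a b powr p \<le> 2 powr p * (a powr p + b powr p)"
    by (intro mult_left_mono) auto
  finally show ?thesis .
qed

lemma integrable_if_integrable_powr:
  fixes h :: "'a \<Rightarrow> real"
  assumes "finite_measure M" "1 \<le> p" "h \<in> borel_measurable M"
    "integrable M (\<lambda>x. \<bar>h x\<bar> powr p)"
  shows "integrable M h"
proof (rule Bochner_Integration.integrable_bound[where f="\<lambda>x. 1 + \<bar>h x\<bar> powr p"])
  interpret finite_measure M by fact
  show "integrable M (\<lambda>x. 1 + \<bar>h x\<bar> powr p)"
    using assms(4) by (intro Bochner_Integration.integrable_add) auto
  show "AE x in M. norm (h x) \<le> norm (1 + \<bar>h x\<bar> powr p)"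
    using le_eps_plus_powr[of 1 "\<bar>h _\<bar>" p] assms(2) by (intro AE_I2) auto
qed fact

lemma tendsto_L1_if_tendsto_Lp:
  fixes h :: "nat \<Rightarrow> 'a \<Rightarrow> real"
  assumes "prob_space M" "1 \<le> p" "\<And>n. h n \<in> borel_measurable M"
    "\<And>n. integrable M (\<lambda>x. \<bar>h n x\<bar> powr p)"
    "(\<lambda>n. \<integral>x. \<bar>h n x\<bar> powr p \<partial>M) \<longlonglongrightarrow> 0"
  shows "(\<lambda>n. \<integral>x. \<bar>h n x\<bar> \<partial>M) \<longlonglongrightarrow> 0"
proof -
  interpret prob_space M by fact
  have int: "integrable M (h n)" for n
    using integrable_if_integrable_powr[OF finite_measure_axioms assms(2,3,4)] .
  show ?thesis
  proof (rule order_tendstoI)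
    fix a :: real
    assume "a < 0"
    then show "\<forall>\<^sub>F n in sequentially. a < (\<integral>x. \<bar>h n x\<bar> \<partial>M)"
      by (simp add: less_le_trans)
  next
    fix a :: real
    assume "0 < a"
    define e where "e = a / 2"
    have "0 < e" using \<open>0 < a\<close> by (simp add: e_def)
    have "(\<lambda>n. e powr (1 - p) * (\<integral>x. \<bar>h n x\<bar> powr p \<partial>M)) \<longlonglongrightarrow> e powr (1 - p) * 0"
      by (intro tendsto_intros assms(5))
    then have "\<forall>\<^sub>F n in sequentially. e powr (1 - p) * (\<integral>x. \<bar>h n x\<bar> powr p \<partial>M) < e"
      using \<open>0 < e\<close> by (intro order_tendstoD) auto
    then show "\<forall>\<^sub>F n in sequentially. (\<integral>x. \<bar>h n x\<bar> \<partial>M) < a"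
    proof eventually_elim
      case (elim n)
      have "(\<integral>x. \<bar>h n x\<bar> \<partial>M) \<le> (\<integral>x. e + e powr (1 - p) * \<bar>h n x\<bar> powr p \<partial>M)"
        using int[of n] assms(2,4) \<open>0 < e\<close> by (intro integral_mono) (auto intro!: le_eps_plus_powr)
      also have "\<dots> = e + e powr (1 - p) * (\<integral>x. \<bar>h n x\<bar> powr p \<partial>M)"
        using assms(4)[of n] by (simp add: prob_space)
      finally show ?case using elim e_def by linarith
    qed
  qed
qed

lemma integrable_norm_diff_powr:
  fixes f g :: "'a \<Rightarrow> 'b::{banach, second_countable_topology}"
  assumes "finite_measure M" "0 \<le> p" "f \<in> borel_measurable M" "bounded (range f)"
    "g \<in> borel_measurable M" "integrable M (\<lambda>x. norm (g x) powr p)"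
  shows "integrable M (\<lambda>x. norm (f x - g x) powr p)"
proof -
  interpret finite_measure M by fact
  obtain B where B: "\<And>x. norm (f x) \<le> B"
    using assms(4) by (auto simp: bounded_iff)
  show ?thesis
  proof (rule Bochner_Integration.integrable_bound)
    show "integrable M (\<lambda>x. 2 powr p * (B powr p + norm (g x) powr p))"
      using assms(6) by auto
    have "norm (f x - g x) powr p \<le> 2 powr p * (B powr p + norm (g x) powr p)" for x
    proof -
      have "norm (f x - g x) powr p \<le> (B + norm (g x)) powr p"
        using B[of x] norm_triangle_ineq4[of "f x" "g x"] assms(2) by (intro powr_mono2) auto
      also have "\<dots> \<le> 2 powr p * (B powr p + norm (g x) powr p)"
        using B[of x] assms(2) by (intro powr_add_le) (auto intro: order_trans[OF norm_ge_zero])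
      finally show ?thesis .
    qed
    then show "AE x in M. norm (norm (f x - g x) powr p) \<le> norm (2 powr p * (B powr p + norm (g x) powr p))"
      by (intro AE_I2) (simp add: abs_of_nonneg)
  qed (use assms(3,5) in measurable)
qed

lemma integrable_bounded_mult:
  fixes w h :: "'a \<Rightarrow> real"
  assumes "w \<in> borel_measurable M" "\<And>x. \<bar>w x\<bar> \<le> B" "integrable M h"
  shows "integrable M (\<lambda>x. w x * h x)"
proof (rule Bochner_Integration.integrable_bound)
  show "integrable M (\<lambda>x. B * \<bar>h x\<bar>)" using assms(3) by auto
  have "\<bar>w x\<bar> * \<bar>h x\<bar> \<le> \<bar>B\<bar> * \<bar>h x\<bar>" for x
    using assms(2)[of x] by (intro mult_right_mono) auto
  then show "AE x in M. norm (w x * h x) \<le> norm (B * \<bar>h x\<bar>)"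
    by (simp add: abs_mult)
qed (use assms(1,3) in measurable)

lemma integral_bounded_mult_tendsto:
  fixes w f :: "nat \<Rightarrow> 'a \<Rightarrow> real"
  assumes w: "\<And>n. w n \<in> borel_measurable M" "\<And>n x. \<bar>w n x\<bar> \<le> B"
    "AE x in M. (\<lambda>n. w n x) \<longlonglongrightarrow> w' x" "w' \<in> borel_measurable M"
    and f: "\<And>n. integrable M (f n)" "integrable M g" "(\<lambda>n. \<integral>x. \<bar>f n x - g x\<bar> \<partial>M) \<longlonglongrightarrow> 0"
  shows "(\<lambda>n. \<integral>x. w n x * f n x \<partial>M) \<longlonglongrightarrow> (\<integral>x. w' x * g x \<partial>M)"
proof -
  have diff: "integrable M (\<lambda>x. f n x - g x)" for n
    using f by auto
  have "(\<lambda>n. \<integral>x. w n x * (f n x - g x) \<partial>M) \<longlonglongrightarrow> 0"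
  proof (rule Lim_null_comparison)
    show "(\<lambda>n. B * (\<integral>x. \<bar>f n x - g x\<bar> \<partial>M)) \<longlonglongrightarrow> 0"
      using tendsto_mult_right_zero[OF f(3)] .
    have "norm (\<integral>x. w n x * (f n x - g x) \<partial>M) \<le> B * (\<integral>x. \<bar>f n x - g x\<bar> \<partial>M)" for n
    proof -
      have "norm (\<integral>x. w n x * (f n x - g x) \<partial>M) \<le> (\<integral>x. \<bar>w n x * (f n x - g x)\<bar> \<partial>M)"
        using integral_norm_bound by simp
      also have "\<dots> \<le> (\<integral>x. B * \<bar>f n x - g x\<bar> \<partial>M)"
        using w(1,2) diff
        by (intro integral_mono integrable_abs integrable_bounded_mult)
          (auto simp: abs_mult intro!: mult_right_mono)
      finally show ?thesis by simp
    qed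
    then show "\<forall>\<^sub>F n in sequentially.
        norm (\<integral>x. w n x * (f n x - g x) \<partial>M) \<le> B * (\<integral>x. \<bar>f n x - g x\<bar> \<partial>M)"
      by simp
  qed
  moreover have "(\<lambda>n. \<integral>x. w n x * g x \<partial>M) \<longlonglongrightarrow> (\<integral>x. w' x * g x \<partial>M)"
  proof (rule integral_dominated_convergence[where w="\<lambda>x. B * \<bar>g x\<bar>"])
    show "AE x in M. (\<lambda>n. w n x * g x) \<longlonglongrightarrow> w' x * g x"
      using w(3) by eventually_elim (intro tendsto_intros)
    show "AE x in M. norm (w n x * g x) \<le> B * \<bar>g x\<bar>" for n
      using w(2) by (intro AE_I2) (auto simp: abs_mult intro!: mult_right_mono)
  qed (use w f in auto)
  ultimately have "(\<lambda>n. (\<integral>x. w n x * (f n x - g x) \<partial>M) + (\<integral>x. w n x * g x \<partial>M))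
      \<longlonglongrightarrow> 0 + (\<integral>x. w' x * g x \<partial>M)"
    by (rule tendsto_add)
  moreover have "(\<integral>x. w n x * f n x \<partial>M)
      = (\<integral>x. w n x * (f n x - g x) \<partial>M) + (\<integral>x. w n x * g x \<partial>M)" for n
  proof -
    have "(\<integral>x. w n x * f n x \<partial>M) = (\<integral>x. w n x * (f n x - g x) + w n x * g x \<partial>M)"
      by (simp add: algebra_simps)
    also have "\<dots> = (\<integral>x. w n x * (f n x - g x) \<partial>M) + (\<integral>x. w n x * g x \<partial>M)"
      by (intro Bochner_Integration.integral_add integrable_bounded_mult[OF w(1,2)] diff f(2))
    finally show ?thesis .
  qed
  ultimately show ?thesis by simp
qed

section \<open>Closability\<close>

lemma integrable_bounded_continuous:
  fixes f :: "'a::topological_space \<Rightarrow> 'b::{banach, second_countable_topology}"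
  assumes "finite_measure M" "sets M = sets borel" "continuous_on UNIV f" "bounded (range f)"
  shows "integrable M f"
proof -
  obtain B where "\<And>x. norm (f x) \<le> B"
    using assms(4) by (auto simp: bounded_iff)
  then show ?thesis
    using assms(1) borel_measurable_continuous_sets_borel[OF assms(2,3)]
    by (intro finite_measure.integrable_const_bound[where B=B]) auto
qed

lemma
  fixes R :: "'a::real_inner \<Rightarrow> 'b::real_normed_vector"
  assumes "bounded_linear R" "\<phi> \<in> C1b"
  shows continuous_on_R_grad: "continuous_on UNIV (\<lambda>x. R (grad \<phi> x))"
    and bounded_range_R_grad: "bounded (range (\<lambda>x. R (grad \<phi> x)))"
proof -
  show "continuous_on UNIV (\<lambda>x. R (grad \<phi> x))"
    using bounded_linear.continuous_on[OF assms(1) C1bD(3)[OF assms(2)]] .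
  have "bounded (R ` range (grad \<phi>))"
    using assms by (intro bounded_linear_image[of "range (grad \<phi>)" R]) (auto simp: C1b_def)
  then show "bounded (range (\<lambda>x. R (grad \<phi> x)))"
    by (simp add: image_image)
qed

lemma bounded_range_inner_left:
  "bounded (range f) \<Longrightarrow> bounded (range (\<lambda>x. f x \<bullet> z))"
  using bounded_linear_image[OF _ bounded_linear_inner_left, of "range f" z] by (simp add: image_image)

lemma integrable_R_grad_inner:
  assumes "finite_measure \<nu>" "sets \<nu> = sets borel" "bounded_linear R" "f \<in> C1b"
  shows "integrable \<nu> (\<lambda>x. R (grad f x) \<bullet> z)"
  using assms by (intro integrable_bounded_continuous continuous_intros
      bounded_range_inner_left continuous_on_R_grad bounded_range_R_grad)

lemma integral_by_parts_arctan:
  fixes \<nu> :: "'a::{real_inner, second_countable_topology} measure"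
  assumes \<nu>: "finite_measure \<nu>" "sets \<nu> = sets borel" and R: "bounded_linear R"
    and ibp: "\<And>\<phi>. \<phi> \<in> C1b \<Longrightarrow> (\<integral>x. R (grad \<phi> x) \<bullet> z \<partial>\<nu>) = (\<integral>x. v x * \<phi> x \<partial>\<nu>)"
    and C1b: "\<phi> \<in> C1b" "\<psi> \<in> C1b"
  shows "(\<integral>x. \<psi> x * inverse (1 + (\<phi> x)\<^sup>2) * (R (grad \<phi> x) \<bullet> z) \<partial>\<nu>)
    = (\<integral>x. arctan (\<phi> x) * (\<psi> x * v x) \<partial>\<nu>) - (\<integral>x. arctan (\<phi> x) * (R (grad \<psi> x) \<bullet> z) \<partial>\<nu>)"
proof -
  note [measurable] = C1b_borel_measurable[OF \<nu>(2) C1b(1)] C1b_borel_measurable[OF \<nu>(2) C1b(2)]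
  obtain B where B: "\<And>x. \<bar>\<psi> x\<bar> \<le> B"
    using C1bD(1)[OF C1b(2)] by blast
  have "\<bar>\<psi> x * inverse (1 + (\<phi> x)\<^sup>2)\<bar> \<le> B * 1" for x
    unfolding abs_mult using B abs_inverse_1_plus_square_le_1 by (intro mult_mono) (auto intro: order_trans[OF abs_ge_zero])
  then have int1: "integrable \<nu> (\<lambda>x. \<psi> x * inverse (1 + (\<phi> x)\<^sup>2) * (R (grad \<phi> x) \<bullet> z))"
    by (intro integrable_bounded_mult[OF _ _ integrable_R_grad_inner[OF \<nu> R C1b(1)]]) auto
  have int2: "integrable \<nu> (\<lambda>x. arctan (\<phi> x) * (R (grad \<psi> x) \<bullet> z))"
    using abs_arctan_le_2 by (intro integrable_bounded_mult[OF _ _ integrable_R_grad_inner[OF \<nu> R C1b(2)]]) auto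
  note arctan_\<phi> = C1b_arctan[OF C1b(1)]
  have "(\<integral>x. arctan (\<phi> x) * (\<psi> x * v x) \<partial>\<nu>) = (\<integral>x. v x * (\<psi> x * arctan (\<phi> x)) \<partial>\<nu>)"
    by (simp add: ac_simps)
  also have "\<dots> = (\<integral>x. R (grad (\<lambda>x. \<psi> x * arctan (\<phi> x)) x) \<bullet> z \<partial>\<nu>)"
    using ibp[OF C1b_mult(1)[OF C1b(2) arctan_\<phi>(1)]] by simp
  also have "\<dots> = (\<integral>x. \<psi> x * inverse (1 + (\<phi> x)\<^sup>2) * (R (grad \<phi> x) \<bullet> z)
      + arctan (\<phi> x) * (R (grad \<psi> x) \<bullet> z) \<partial>\<nu>)"
    unfolding C1b_mult(2)[OF C1b(2) arctan_\<phi>(1)] arctan_\<phi>(2)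
    by (simp add: linear_add[OF bounded_linear.linear[OF R]] linear_scale[OF bounded_linear.linear[OF R]]
        inner_add_left)
  also have "\<dots> = (\<integral>x. \<psi> x * inverse (1 + (\<phi> x)\<^sup>2) * (R (grad \<phi> x) \<bullet> z) \<partial>\<nu>)
      + (\<integral>x. arctan (\<phi> x) * (R (grad \<psi> x) \<bullet> z) \<partial>\<nu>)"
    using int1 int2 by (rule Bochner_Integration.integral_add)
  finally show ?thesis by simp
qed

lemma integral_C1b_mult_eq_0_if_graph_limit:
  fixes \<nu> :: "'a::{real_inner, second_countable_topology} measure"
  assumes \<nu>: "finite_measure \<nu>" "sets \<nu> = sets borel" and R: "bounded_linear R"
    and ibp: "\<And>\<phi>. \<phi> \<in> C1b \<Longrightarrow> (\<integral>x. R (grad \<phi> x) \<bullet> z \<partial>\<nu>) = (\<integral>x. v x * \<phi> x \<partial>\<nu>)"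
    and v: "integrable \<nu> v"
    and \<phi>: "\<And>n. \<phi> n \<in> C1b" "AE x in \<nu>. (\<lambda>n. \<phi> n x) \<longlonglongrightarrow> 0"
    and g: "integrable \<nu> g" "(\<lambda>n. \<integral>x. \<bar>R (grad (\<phi> n) x) \<bullet> z - g x\<bar> \<partial>\<nu>) \<longlonglongrightarrow> 0"
    and \<psi>: "\<psi> \<in> C1b"
  shows "(\<integral>x. \<psi> x * g x \<partial>\<nu>) = 0"
proof -
  note [measurable] = C1b_borel_measurable[OF \<nu>(2) \<psi>] C1b_borel_measurable[OF \<nu>(2) \<phi>(1)]
  obtain B where B: "\<And>x. \<bar>\<psi> x\<bar> \<le> B"
    using C1bD(1)[OF \<psi>] by blast
  have arctan_tendsto: "AE x in \<nu>. (\<lambda>n. arctan (\<phi> n x)) \<longlonglongrightarrow> 0"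
    using \<phi>(2) by eventually_elim (auto intro: tendsto_eq_intros)
  have "(\<lambda>n. \<integral>x. \<psi> x * inverse (1 + (\<phi> n x)\<^sup>2) * (R (grad (\<phi> n) x) \<bullet> z) \<partial>\<nu>)
      \<longlonglongrightarrow> (\<integral>x. \<psi> x * g x \<partial>\<nu>)"
  proof (rule integral_bounded_mult_tendsto[where B=B])
    show "\<bar>\<psi> x * inverse (1 + (\<phi> n x)\<^sup>2)\<bar> \<le> B" for n x
      using mult_mono[OF B abs_inverse_1_plus_square_le_1] B[of x]
      by (simp add: abs_mult)
    show "AE x in \<nu>. (\<lambda>n. \<psi> x * inverse (1 + (\<phi> n x)\<^sup>2)) \<longlonglongrightarrow> \<psi> x"
      using \<phi>(2)
    proof eventually_elim
      case (elim x)
      then have "(\<lambda>n. \<psi> x * inverse (1 + (\<phi> n x)\<^sup>2)) \<longlonglongrightarrow> \<psi> x * inverse (1 + 0\<^sup>2)"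
        by (intro tendsto_intros) auto
      then show ?case by simp
    qed
  qed (use g integrable_R_grad_inner[OF \<nu> R] \<phi>(1) in auto)
  moreover have "(\<lambda>n. (\<integral>x. arctan (\<phi> n x) * (\<psi> x * v x) \<partial>\<nu>)
      - (\<integral>x. arctan (\<phi> n x) * (R (grad \<psi> x) \<bullet> z) \<partial>\<nu>))
      \<longlonglongrightarrow> (\<integral>x. 0 * (\<psi> x * v x) \<partial>\<nu>) - (\<integral>x. 0 * (R (grad \<psi> x) \<bullet> z) \<partial>\<nu>)"
    using abs_arctan_le_2 arctan_tendsto integrable_R_grad_inner[OF \<nu> R \<psi>] v
    by (intro tendsto_diff integral_bounded_mult_tendsto[where B=2]
        integrable_bounded_mult[where B=B] B) auto
  ultimately show ?thesis
    using integral_by_parts_arctan[OF \<nu> R ibp \<phi>(1) \<psi>] LIMSEQ_unique by fastforce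
qed

lemma Lp_closable_R_grad_inner:
  fixes \<nu> :: "'a::{real_inner, second_countable_topology} measure"
  assumes \<nu>: "prob_space \<nu>" "sets \<nu> = sets borel" and R: "bounded_linear R"
    and ibp: "\<And>\<phi>. \<phi> \<in> C1b \<Longrightarrow> (\<integral>x. R (grad \<phi> x) \<bullet> z \<partial>\<nu>) = (\<integral>x. v x * \<phi> x \<partial>\<nu>)"
    and v: "integrable \<nu> v" and p: "1 \<le> p"
  shows "Lp_closable \<nu> p C1b (\<lambda>\<phi> x. R (grad \<phi> x) \<bullet> z)"
  unfolding Lp_closable_def
proof (intro allI impI, elim conjE)
  fix \<phi> :: "nat \<Rightarrow> 'a \<Rightarrow> real" and g :: "'a \<Rightarrow> real"
  assume \<phi>: "\<forall>n. \<phi> n \<in> C1b" "(\<lambda>n. \<integral>x. \<bar>\<phi> n x\<bar> powr p \<partial>\<nu>) \<longlonglongrightarrow> 0"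
    and g: "g \<in> borel_measurable \<nu>" "integrable \<nu> (\<lambda>x. norm (g x) powr p)"
    and graph: "(\<lambda>n. \<integral>x. norm (R (grad (\<phi> n) x) \<bullet> z - g x) powr p \<partial>\<nu>) \<longlonglongrightarrow> 0"
  interpret prob_space \<nu> by (rule \<nu>(1))
  note [measurable] = C1b_borel_measurable[OF \<nu>(2) \<phi>(1)[rule_format]] g(1)
  have T: "(\<lambda>x. R (grad (\<phi> n) x) \<bullet> z) \<in> borel_measurable \<nu>"
    "bounded (range (\<lambda>x. R (grad (\<phi> n) x) \<bullet> z))" for n
    using continuous_on_R_grad[OF R] bounded_range_R_grad[OF R] \<phi>(1)
    by (auto intro!: borel_measurable_continuous_sets_borel[OF \<nu>(2)] continuous_intros
        bounded_range_inner_left)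
  have "integrable \<nu> g"
    using integrable_if_integrable_powr[OF finite_measure_axioms p g(1)] g(2) by simp
  moreover have "(\<lambda>n. \<integral>x. \<bar>R (grad (\<phi> n) x) \<bullet> z - g x\<bar> \<partial>\<nu>) \<longlonglongrightarrow> 0"
    using integrable_norm_diff_powr[OF finite_measure_axioms _ T g] p graph
    by (intro tendsto_L1_if_tendsto_Lp[OF \<nu>(1) p]) (auto intro: borel_measurable_diff T(1))
  moreover obtain r :: "nat \<Rightarrow> nat"
    where "strict_mono r" "AE x in \<nu>. (\<lambda>n. \<phi> (r n) x) \<longlonglongrightarrow> 0"
  proof -
    have bounded: "bounded (range (\<phi> n))" for n
      using \<phi>(1) unfolding C1b_def by blast
    then have "integrable \<nu> (\<lambda>x. \<bar>\<phi> n x\<bar> powr p)" for n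
      using integrable_norm_diff_powr[OF finite_measure_axioms _ _ _ borel_measurable_const,
          of p "\<phi> n" 0] p by auto
    then have "(\<lambda>n. \<integral>x. norm (\<phi> n x) \<partial>\<nu>) \<longlonglongrightarrow> 0"
      using tendsto_L1_if_tendsto_Lp[OF \<nu>(1) p _ _ \<phi>(2)] by simp
    moreover have "integrable \<nu> (\<phi> n)" for n
      using \<phi>(1) bounded
      by (intro integrable_bounded_continuous[OF finite_measure_axioms \<nu>(2)]) (auto dest: C1bD(5))
    ultimately show ?thesis
      using that tendsto_L1_AE_subseq by blast
  qed
  ultimately have "(\<integral>x. \<psi> x * g x \<partial>\<nu>) = 0" if "\<psi> \<in> C1b" for \<psi>
    using \<phi>(1) that LIMSEQ_subseq_LIMSEQ[OF _ \<open>strict_mono r\<close>]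
    by (intro integral_C1b_mult_eq_0_if_graph_limit[OF finite_measure_axioms \<nu>(2) R ibp v,
          where \<phi>="\<lambda>n. \<phi> (r n)"]) (auto simp: o_def)
  then show "AE x in \<nu>. g x = 0"
    using AE_eq_0_if_orthogonal_C1b[OF \<nu>(2) _ \<open>integrable \<nu> g\<close>] sigma_finite_measure by blast
qed

lemma abs_inner_powr_le: "0 \<le> p \<Longrightarrow> \<bar>a \<bullet> z\<bar> powr p \<le> norm z powr p * norm a powr p"
  using powr_mono2[OF _ abs_ge_zero Cauchy_Schwarz_ineq2[of a z]] by (simp add: powr_mult mult.commute)

lemma AE_eq_0_if_AE_inner_eq_0:
  fixes g :: "'a \<Rightarrow> 'b::{real_inner, second_countable_topology}"
  assumes "\<And>z. AE x in M. g x \<bullet> z = 0"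
  shows "AE x in M. g x = 0"
proof -
  obtain D :: "'b set" where "countable D" and dense: "\<And>X. open X \<Longrightarrow> X \<noteq> {} \<Longrightarrow> \<exists>d\<in>D. d \<in> X"
    using countable_dense_setE by blast
  have "x \<in> closure D" for x
    unfolding closure_approachable using dense[of "ball x _"] by (auto simp: dist_commute)
  then have "closure D = UNIV" by auto
  have "AE x in M. \<forall>d\<in>D. g x \<bullet> d = 0"
    using assms \<open>countable D\<close> by (simp add: AE_ball_countable)
  then show ?thesis
  proof eventually_elim
    case (elim x)
    have "continuous_on (closure D) (\<lambda>d. g x \<bullet> d)"
      by (intro continuous_intros)
    then have "g x \<bullet> g x = 0"
      using continuous_constant_on_closure[of D "\<lambda>d. g x \<bullet> d" 0 "g x"] elim \<open>closure D = UNIV\<close>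
      by auto
    then show ?case by simp
  qed
qed

lemma Lp_closable_if_Lp_closable_inner:
  fixes T :: "('a \<Rightarrow> real) \<Rightarrow> 'a \<Rightarrow> 'b::{real_inner, banach, second_countable_topology}"
  assumes M: "finite_measure M" and p: "0 \<le> p"
    and T: "\<And>\<phi>. \<phi> \<in> D \<Longrightarrow> T \<phi> \<in> borel_measurable M" "\<And>\<phi>. \<phi> \<in> D \<Longrightarrow> bounded (range (T \<phi>))"
    and inner: "\<And>z. Lp_closable M p D (\<lambda>\<phi> x. T \<phi> x \<bullet> z)"
  shows "Lp_closable M p D T"
  unfolding Lp_closable_def
proof (intro allI impI, elim conjE)
  fix \<phi> :: "nat \<Rightarrow> 'a \<Rightarrow> real" and g :: "'a \<Rightarrow> 'b"
  assume \<phi>: "\<forall>n. \<phi> n \<in> D" "(\<lambda>n. \<integral>x. \<bar>\<phi> n x\<bar> powr p \<partial>M) \<longlonglongrightarrow> 0"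
    and g: "g \<in> borel_measurable M" "integrable M (\<lambda>x. norm (g x) powr p)"
    and graph: "(\<lambda>n. \<integral>x. norm (T (\<phi> n) x - g x) powr p \<partial>M) \<longlonglongrightarrow> 0"
  note [measurable] = T(1)[OF \<phi>(1)[rule_format]] g(1)
  have "AE x in M. g x \<bullet> z = 0" for z
  proof (rule inner[unfolded Lp_closable_def, rule_format], intro conjI)
    show "(\<lambda>x. g x \<bullet> z) \<in> borel_measurable M"
      by measurable
    show "integrable M (\<lambda>x. norm (g x \<bullet> z) powr p)"
    proof (rule Bochner_Integration.integrable_bound[where f="\<lambda>x. norm z powr p * norm (g x) powr p"])
      show "integrable M (\<lambda>x. norm z powr p * norm (g x) powr p)"
        using g(2) by simp
      show "AE x in M. norm (norm (g x \<bullet> z) powr p) \<le> norm (norm z powr p * norm (g x) powr p)"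
        using abs_inner_powr_le[OF p] by (intro AE_I2) simp
    qed measurable
    have le: "(\<integral>x. norm (T (\<phi> n) x \<bullet> z - g x \<bullet> z) powr p \<partial>M)
        \<le> norm z powr p * (\<integral>x. norm (T (\<phi> n) x - g x) powr p \<partial>M)" for n
    proof -
      have dominant: "integrable M (\<lambda>x. norm z powr p * norm (T (\<phi> n) x - g x) powr p)"
        using integrable_norm_diff_powr[OF M p _ T(2) g] \<phi>(1) by simp
      have bound: "norm (T (\<phi> n) x \<bullet> z - g x \<bullet> z) powr p
          \<le> norm z powr p * norm (T (\<phi> n) x - g x) powr p" for x
        using abs_inner_powr_le[OF p, of "T (\<phi> n) x - g x" z] by (simp add: inner_diff_left)
      have "integrable M (\<lambda>x. norm (T (\<phi> n) x \<bullet> z - g x \<bullet> z) powr p)"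
        by (rule Bochner_Integration.integrable_bound[OF dominant]) (use bound in \<open>auto intro!: AE_I2\<close>)
      with dominant bound have "(\<integral>x. norm (T (\<phi> n) x \<bullet> z - g x \<bullet> z) powr p \<partial>M)
          \<le> (\<integral>x. norm z powr p * norm (T (\<phi> n) x - g x) powr p \<partial>M)"
        by (intro integral_mono)
      then show ?thesis by simp
    qed
    show "(\<lambda>n. \<integral>x. norm (T (\<phi> n) x \<bullet> z - g x \<bullet> z) powr p \<partial>M) \<longlonglongrightarrow> 0"
    proof (rule tendsto_sandwich[OF _ _ tendsto_const tendsto_mult_right_zero[OF graph]])
      show "\<forall>\<^sub>F n in sequentially. 0 \<le> (\<integral>x. norm (T (\<phi> n) x \<bullet> z - g x \<bullet> z) powr p \<partial>M)"
        by (intro always_eventually allI integral_nonneg_AE AE_I2) simp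
    qed (use le in \<open>intro always_eventually allI\<close>)
  qed (use \<phi> in simp_all)
  then show "AE x in M. g x = 0"
    by (rule AE_eq_0_if_AE_inner_eq_0)
qed

theorem proposition2p3:
  fixes \<nu> :: "'a::{real_inner, banach, second_countable_topology} measure"
    and R :: "'a \<Rightarrow> 'a"
  assumes "prob_space \<nu>"
    and "sets \<nu> = sets borel"
    and "bounded_linear R"
    and "\<forall>z. \<exists>v. v \<in> borel_measurable \<nu>
                 \<and> (\<forall>q>1. integrable \<nu> (\<lambda>x. \<bar>v x\<bar> powr q))
                 \<and> (\<forall>\<phi>\<in>C1b. (\<integral>x. R (grad \<phi> x) \<bullet> z \<partial>\<nu>) = (\<integral>x. v x * \<phi> x \<partial>\<nu>))"
    and "p \<ge> 1"
  shows "(\<forall>z. Lp_closable \<nu> p C1b (\<lambda>\<phi> x. R (grad \<phi> x) \<bullet> z))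
         \<and> Lp_closable \<nu> p C1b (\<lambda>\<phi> x. R (grad \<phi> x))"
proof -
  note \<nu> = assms(1,2) and R = assms(3)
  have fin: "finite_measure \<nu>"
    using \<nu>(1) by (rule prob_space.finite_measure)
  have inner: "Lp_closable \<nu> p C1b (\<lambda>\<phi> x. R (grad \<phi> x) \<bullet> z)" for z
  proof -
    obtain v where v: "v \<in> borel_measurable \<nu>" "\<forall>q>1. integrable \<nu> (\<lambda>x. \<bar>v x\<bar> powr q)"
      "\<forall>\<phi>\<in>C1b. (\<integral>x. R (grad \<phi> x) \<bullet> z \<partial>\<nu>) = (\<integral>x. v x * \<phi> x \<partial>\<nu>)"
      using assms(4) by blast
    have "integrable \<nu> v"
      using integrable_if_integrable_powr[OF fin _ v(1) v(2)[rule_format, of 2]] by simp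
    from Lp_closable_R_grad_inner[OF \<nu> R _ this assms(5)] v(3) show ?thesis
      by blast
  qed
  have "Lp_closable \<nu> p C1b (\<lambda>\<phi> x. R (grad \<phi> x))"
  proof (rule Lp_closable_if_Lp_closable_inner[OF fin _ _ _ inner])
    show "0 \<le> p" using assms(5) by simp
    show "(\<lambda>x. R (grad \<phi> x)) \<in> borel_measurable \<nu>" if "\<phi> \<in> C1b" for \<phi>
      using borel_measurable_continuous_sets_borel[OF \<nu>(2) continuous_on_R_grad[OF R that]] .
    show "bounded (range (\<lambda>x. R (grad \<phi> x)))" if "\<phi> \<in> C1b" for \<phi>
      using bounded_range_R_grad[OF R that] .
  qed
  with inner show ?thesis by blast
qed

end
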